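(* Let $U\subset\mathbb C$ be a convex domain bounded by a smooth Jordan curve, and let $f$ be holomorphic in a neighborhood of $\overline U$ with $\operatorname{Re}(f')>0$ in $U$ and $f(z)\ne z$ for all $z\in\partial U$. Let $V^*=\{z\in U\cap f^{-1}(U): f(z)\ne z\}$ and $U^*=\{z\in U: f(z)\neq z\}$. If $z\in V^*$, then the segment $[z,f(z)]$ is contained in $U^*$.
   Context: $[z,w]$ denotes the Euclidean segment between $z$ and $w$. *)

theory Defs
  imports "HOL-Analysis.Analysis"
begin

definition smooth_jordan_curve :: "(real \<Rightarrow> complex) \<Rightarrow> bool" where
  "smooth_jordan_curve g \<longleftrightarrow>
     simple_path g \<and> pathfinish g = pathstart g \<and>
     g C1_differentiable_on {0..1} \<and>
     (\<forall>t\<in>{0..1}. vector_derivative g (at t within {0..1}) \<noteq> 0) \<and>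
     vector_derivative g (at 0 within {0..1}) = vector_derivative g (at 1 within {0..1})"

end

theory Submission
  imports Defs
begin

text \<open>Since \<open>Re f' > 0\<close> on the convex set \<open>U\<close>, the map \<open>f\<close> is strictly monotone there:
\<open>(b - a) \<bullet> (f b - f a) > 0\<close> for \<open>a \<noteq> b\<close>. A fixed point \<open>w\<close> of \<open>f\<close> on the segment
\<open>[z, f z] \<subseteq> U\<close> would give \<open>(z - w) \<bullet> (f z - w) > 0\<close>, whereas for every point \<open>w\<close> of a
segment \<open>[a, b]\<close> the vectors \<open>a - w\<close> and \<open>b - w\<close> point in opposite directions.\<close>

lemma inner_diff_nonpos_if_in_closed_segment:
  fixes a b w :: "'a :: real_inner"
  assumes "w \<in> closed_segment a b"
  shows "(a - w) \<bullet> (b - w) \<le> 0"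
proof -
  obtain t where t: "0 \<le> t" "t \<le> 1" and w: "w = (1 - t) *\<^sub>R a + t *\<^sub>R b"
    using assms unfolding in_segment by blast
  have "a - w = - (t *\<^sub>R (b - a))" and "b - w = (1 - t) *\<^sub>R (b - a)"
    unfolding w by (simp_all add: algebra_simps)
  then have "(a - w) \<bullet> (b - w) = - (t * (1 - t) * ((b - a) \<bullet> (b - a)))"
    by simp
  with t show ?thesis by simp
qed

lemma inner_diff_pos_if_Re_deriv_pos:
  fixes f f' :: "complex \<Rightarrow> complex"
  assumes "convex S"
    and deriv: "\<And>w. w \<in> S \<Longrightarrow> (f has_field_derivative f' w) (at w)"
    and pos: "\<And>w. w \<in> S \<Longrightarrow> Re (f' w) > 0"
    and "a \<in> S" "b \<in> S" "a \<noteq> b"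
  shows "(b - a) \<bullet> (f b - f a) > 0"
proof -
  define d where "d = b - a"
  define \<phi> where "\<phi> s = d \<bullet> f (a + of_real s * d)" for s
  have on_segment: "a + of_real s * d \<in> S" if "0 \<le> s" "s \<le> 1" for s
  proof -
    have "a + of_real s * d = (1 - s) *\<^sub>R a + s *\<^sub>R b"
      unfolding d_def by (simp add: scaleR_conv_of_real algebra_simps)
    then show ?thesis
      using \<open>convex S\<close> \<open>a \<in> S\<close> \<open>b \<in> S\<close> that by (simp add: convex_alt)
  qed
  have "\<phi> 0 < \<phi> 1"
  proof (rule DERIV_pos_imp_increasing[OF zero_less_one])
    fix s :: real
    assume s: "0 \<le> s" "s \<le> 1"
    let ?w = "a + of_real s * d"
    have "((\<lambda>u. f (a + u * d)) has_field_derivative f' ?w * d) (at (of_real s))"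
      by (rule DERIV_chain2[of f _ "\<lambda>u. a + u * d", OF deriv[OF on_segment[OF s]]])
        (auto intro!: derivative_eq_intros)
    then have "((\<lambda>s. f (a + of_real s * d)) has_vector_derivative f' ?w * d) (at s)"
      by (rule has_vector_derivative_real_field)
    then have "(\<phi> has_real_derivative d \<bullet> (f' ?w * d)) (at s)"
      unfolding \<phi>_def has_real_derivative_iff_has_vector_derivative
      by (rule bounded_linear.has_vector_derivative[OF bounded_linear_inner_right])
    moreover have "d \<bullet> (f' ?w * d) = (d \<bullet> d) * Re (f' ?w)"
      by (simp add: inner_complex_def algebra_simps)
    moreover have "(d \<bullet> d) * Re (f' ?w) > 0"
      using pos[OF on_segment[OF s]] \<open>a \<noteq> b\<close> by (simp add: d_def)
    ultimately show "\<exists>y. (\<phi> has_real_derivative y) (at s) \<and> 0 < y"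
      by auto
  qed
  then show ?thesis
    by (simp add: \<phi>_def d_def inner_diff_right)
qed

theorem lemma3p3:
  fixes U :: "complex set" and f :: "complex \<Rightarrow> complex" and g :: "real \<Rightarrow> complex"
    and z :: complex
  assumes "open U" and "connected U" and "convex U" and "bounded U"
    and "smooth_jordan_curve g" and "frontier U = path_image g"
    and "\<exists>W. open W \<and> closure U \<subseteq> W \<and> f holomorphic_on W"
    and "\<forall>w\<in>U. Re (deriv f w) > 0"
    and "\<forall>w\<in>frontier U. f w \<noteq> w"
    and "z \<in> {w \<in> U \<inter> f -` U. f w \<noteq> w}"
  shows "closed_segment z (f z) \<subseteq> {w \<in> U. f w \<noteq> w}"
proof
  fix w
  assume w: "w \<in> closed_segment z (f z)"
  from assms(10) have "z \<in> U" "f z \<in> U" "f z \<noteq> z" by auto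
  with \<open>convex U\<close> w have "w \<in> U"
    using closed_segment_subset by blast
  obtain W where "open W" "closure U \<subseteq> W" "f holomorphic_on W"
    using assms(7) by blast
  then have deriv: "(f has_field_derivative deriv f u) (at u)" if "u \<in> U" for u
    using that closure_subset holomorphic_derivI by blast
  have "f w \<noteq> w"
  proof
    assume "f w = w"
    with \<open>f z \<noteq> z\<close> have "w \<noteq> z" by auto
    then have "(z - w) \<bullet> (f z - w) > 0"
      using inner_diff_pos_if_Re_deriv_pos[OF \<open>convex U\<close> deriv] assms(8)
        \<open>w \<in> U\<close> \<open>z \<in> U\<close> \<open>f w = w\<close> by force
    with inner_diff_nonpos_if_in_closed_segment[OF w] show False by simp
  qed
  with \<open>w \<in> U\<close> show "w \<in> {w \<in> U. f w \<noteq> w}" by simp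
qed

end
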